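(* Let $n\ge 3$ be an integer. (1) If $n=3$ or $n=4$, then $l_0^{(n-1)^3}(n^3)>\frac{(n!)^{2n}}{n^{n^2}}$. (2) If $n\ge 5$, then $l_0^{(n-1)^3}(n^3)<\frac{(n!)^{2n}}{n^{n^2}}$.
   Context: For a positive integer $d$ and integer $m$, define $$u_0^d(m)=\binom{m-\lfloor \frac{d}{2}\rfloor -1}{\lfloor \frac{d-1}{2}\rfloor}+\binom{m-\lfloor \frac{d-1}{2}\rfloor -1}{\lfloor \frac{d}{2}\rfloor},$$ where $\binom{a}{b}=0$ when $a<b$; and for a number $x$, $l_0^d(x)=k$ if and only if $k$ is the integer with $u_0^d(k-1)<x\le u_0^d(k)$. *)

theory Defs
  imports Complex_Main
begin

text \<open>Binomial coefficient on integers with the convention binom a b = 0 when a < b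
  (here b is always nonnegative).\<close>
definition binom0 :: "int \<Rightarrow> int \<Rightarrow> int" where
  "binom0 a b = (if a < b then 0 else int (nat a choose nat b))"

definition u0 :: "nat \<Rightarrow> int \<Rightarrow> int" where
  "u0 d m = binom0 (m - int (d div 2) - 1) (int ((d - 1) div 2))
          + binom0 (m - int ((d - 1) div 2) - 1) (int (d div 2))"

definition l0 :: "nat \<Rightarrow> real \<Rightarrow> int" where
  "l0 d x = (THE k::int. real_of_int (u0 d (k - 1)) < x \<and> x \<le> real_of_int (u0 d k))"

end

theory Submission
  imports Defs
begin

text \<open>Write \<open>d = (n-1)^3\<close>. Since \<open>u0 d (d+1) = d+1 < n^3\<close> while already
  \<open>u0 d (d+2) \<ge> (\<lfloor>d/2\<rfloor>+2 choose 2) \<ge> n^3\<close> for \<open>n \<ge> 5\<close>, we get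
  \<open>l0 d (n^3) = d + 2\<close>, a polynomial in \<open>n\<close>. On the other side
  \<open>(n!)^2 \<ge> 4 n^n\<close> for \<open>n \<ge> 5\<close>, so \<open>(n!)^(2n) / n^(n^2) \<ge> 4^n > d + 2\<close>.\<close>

lemma binom0_mono_left:
  assumes "a \<le> a'" "0 \<le> b"
  shows "binom0 a b \<le> binom0 a' b"
proof (cases "a < b")
  case True
  then show ?thesis by (simp add: binom0_def)
next
  case False
  then have "nat a choose nat b \<le> nat a' choose nat b"
    using assms by (intro binomial_right_mono) auto
  then show ?thesis using False assms by (simp add: binom0_def)
qed

lemma u0_mono: "m \<le> m' \<Longrightarrow> u0 d m \<le> u0 d m'"
  unfolding u0_def by (intro add_mono binom0_mono_left) auto

lemma l0_eqI:
  assumes "real_of_int (u0 d (k - 1)) < x" "x \<le> real_of_int (u0 d k)"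
  shows "l0 d x = k"
  unfolding l0_def
proof (rule the_equality)
  show "real_of_int (u0 d (k - 1)) < x \<and> x \<le> real_of_int (u0 d k)"
    using assms by simp
next
  fix k' assume k': "real_of_int (u0 d (k' - 1)) < x \<and> x \<le> real_of_int (u0 d k')"
  show "k' = k"
  proof (rule ccontr)
    assume "k' \<noteq> k"
    then consider "k' \<le> k - 1" | "k \<le> k' - 1" by linarith
    then show False
    proof cases
      case 1
      then have "u0 d k' \<le> u0 d (k - 1)" by (rule u0_mono)
      then show False using k' assms by linarith
    next
      case 2
      then have "u0 d k \<le> u0 d (k' - 1)" by (rule u0_mono)
      then show False using k' assms by linarith
    qed
  qed
qed

lemma u0_self_plus_one:
  assumes "d \<ge> 1"
  shows "u0 d (int d + 1) = int d + 1"
proof -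
  have halves: "d div 2 + (d - 1) div 2 = d - 1" using assms by presburger
  have e1: "int d + 1 - int (d div 2) - 1 = int ((d - 1) div 2 + 1)"
    and e2: "int d + 1 - int ((d - 1) div 2) - 1 = int (d div 2 + 1)"
    using halves assms by linarith+
  have "u0 d (int d + 1) = int (Suc ((d - 1) div 2)) + int (Suc (d div 2))"
    unfolding u0_def e1 e2 binom0_def nat_int by simp
  also have "\<dots> = int d + 1" using halves assms by simp
  finally show ?thesis .
qed

lemma u0_self_plus_two_ge:
  assumes "d \<ge> 1"
  shows "int ((d div 2 + 2) choose 2) \<le> u0 d (int d + 2)"
proof -
  have "d div 2 + (d - 1) div 2 = d - 1" using assms by presburger
  then have e: "int d + 2 - int ((d - 1) div 2) - 1 = int (d div 2 + 2)"
    using assms by linarith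
  have "binom0 (int d + 2 - int ((d - 1) div 2) - 1) (int (d div 2))
      = int ((d div 2 + 2) choose (d div 2))"
    unfolding e binom0_def nat_int by simp
  also have "(d div 2 + 2) choose (d div 2) = (d div 2 + 2) choose 2"
    by (subst binomial_symmetric) auto
  finally have "binom0 (int d + 2 - int ((d - 1) div 2) - 1) (int (d div 2))
      = int ((d div 2 + 2) choose 2)" .
  moreover have "0 \<le> binom0 (int d + 2 - int (d div 2) - 1) (int ((d - 1) div 2))"
    by (simp add: binom0_def)
  ultimately show ?thesis unfolding u0_def by linarith
qed

lemma l0_eq_self_plus_two:
  assumes "d \<ge> 1" "real d + 1 < x" "x \<le> real_of_int (u0 d (int d + 2))"
  shows "l0 d x = int d + 2"
proof (rule l0_eqI)
  have "int d + 2 - 1 = int d + 1" by simp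
  then show "real_of_int (u0 d (int d + 2 - 1)) < x"
    using assms(2) u0_self_plus_one[OF assms(1)] by (simp only:)
qed (fact assms(3))

lemma succ_cube_le_choose_two:
  fixes m :: nat
  assumes "m \<ge> 4"
  shows "(m + 1) ^ 3 \<le> (m ^ 3 div 2 + 2) choose 2"
proof -
  define d where "d = m ^ 3"
  define a where "a = d div 2"
  have "64 \<le> d" unfolding d_def using power_mono[OF assms, of 3] by simp
  have "(m + 1) ^ 3 \<le> (2 * m) ^ 3" using assms by (intro power_mono) auto
  then have "(m + 1) ^ 3 * 8 \<le> 64 * d" unfolding d_def by (simp add: power_mult_distrib)
  also have "64 * d \<le> d * d" using \<open>64 \<le> d\<close> by simp
  also have "d * d \<le> (2 * a + 2) * (2 * a + 2)"
    unfolding a_def by (intro mult_le_mono) presburger+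
  also have "\<dots> \<le> 4 * ((a + 2) * (a + 1))" by (simp add: algebra_simps)
  finally have "(m + 1) ^ 3 \<le> (a + 2) * (a + 1) div 2" by linarith
  then show ?thesis unfolding a_def d_def by (simp add: choose_two mult.commute)
qed

lemma Suc_power_le_three_mult_power: "(n + 1) ^ n \<le> 3 * n ^ n"
proof (cases "n = 0")
  case False
  then have n: "real n > 0" by simp
  have "(1 + 1 / real n) ^ n \<le> exp (1 / real n) ^ n"
    by (intro power_mono) (auto simp del: exp_ge_add_one_self intro: exp_ge_add_one_self)
  also have "\<dots> = exp 1" using n by (simp add: exp_of_nat_mult[symmetric])
  also have "\<dots> \<le> 3" by (rule exp_le)
  finally have "(1 + 1 / real n) ^ n * real n ^ n \<le> 3 * real n ^ n"
    by (intro mult_right_mono) simp_all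
  moreover have "(1 + 1 / real n) ^ n * real n ^ n = real (n + 1) ^ n"
    using n by (simp add: power_mult_distrib[symmetric] field_simps)
  ultimately have "real ((n + 1) ^ n) \<le> real (3 * n ^ n)" by simp
  then show ?thesis by linarith
qed simp

lemma four_mult_power_self_le_fact_square:
  "n \<ge> 5 \<Longrightarrow> 4 * n ^ n \<le> (fact n :: nat) ^ 2"
proof (induction n rule: nat_induct_at_least)
  case base
  then show ?case by code_simp
next
  case (Suc n)
  have "3 * n ^ n \<le> (n + 1) * n ^ n" using Suc.hyps by (intro mult_le_mono1) simp
  then have "(n + 1) ^ n \<le> (n + 1) * n ^ n"
    using Suc_power_le_three_mult_power[of n] by linarith
  then have "4 * (n + 1) * (n + 1) ^ n \<le> 4 * (n + 1) * ((n + 1) * n ^ n)"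
    by (rule mult_le_mono2)
  have "4 * Suc n ^ Suc n = 4 * (n + 1) * (n + 1) ^ n" by (simp add: algebra_simps)
  also have "\<dots> \<le> 4 * (n + 1) * ((n + 1) * n ^ n)" by fact
  also have "\<dots> = (n + 1) ^ 2 * (4 * n ^ n)" by (simp add: power2_eq_square algebra_simps)
  also have "\<dots> \<le> (n + 1) ^ 2 * fact n ^ 2" using Suc.IH by simp
  also have "\<dots> = fact (Suc n) ^ 2" by (simp add: power_mult_distrib[symmetric])
  finally show ?case .
qed

lemma cube_plus_two_less_four_power:
  "m \<ge> 4 \<Longrightarrow> m ^ 3 + 2 < (4::nat) ^ (m + 1)"
proof (induction m rule: nat_induct_at_least)
  case (Suc m)
  have "(m + 1) ^ 3 = m ^ 3 + 3 * m ^ 2 + 3 * m + 1"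
    by (simp add: power3_eq_cube power2_eq_square algebra_simps)
  moreover have "4 * m ^ 2 \<le> m ^ 3" "4 * m \<le> m ^ 2"
    using Suc.hyps by (simp_all add: power3_eq_cube power2_eq_square)
  ultimately show ?case using Suc.IH by simp
qed simp

lemma cube_plus_two_mult_less_fact_power:
  assumes "n \<ge> 5"
  shows "((n - 1) ^ 3 + 2) * n ^ (n ^ 2) < (fact n :: nat) ^ (2 * n)"
proof -
  have "(n - 1) ^ 3 + 2 < 4 ^ n"
    using cube_plus_two_less_four_power[of "n - 1"] assms by simp
  then have "((n - 1) ^ 3 + 2) * n ^ (n ^ 2) < 4 ^ n * n ^ (n ^ 2)"
    using assms by (intro mult_strict_right_mono) simp_all
  also have "\<dots> = (4 * n ^ n) ^ n"
    by (simp add: power_mult_distrib power_mult power2_eq_square)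
  also have "\<dots> \<le> (fact n ^ 2) ^ n"
    using four_mult_power_self_le_fact_square[OF assms] by (rule power_mono) simp
  also have "\<dots> = fact n ^ (2 * n)" by (simp add: power_mult)
  finally show ?thesis .
qed

lemma l0_cube_eq:
  assumes "n \<ge> 5"
  shows "l0 ((n - 1) ^ 3) (real (n ^ 3)) = int ((n - 1) ^ 3) + 2"
proof (rule l0_eq_self_plus_two)
  define m where "m = n - 1"
  have n: "n = m + 1" and "m \<ge> 4" using assms unfolding m_def by simp_all
  show "(n - 1) ^ 3 \<ge> 1" using assms by simp
  have "m ^ 3 + 1 < (m + 1) ^ 3"
    using \<open>m \<ge> 4\<close> by (simp add: power3_eq_cube algebra_simps)
  then have "real (m ^ 3 + 1) < real ((m + 1) ^ 3)" by (simp only: of_nat_less_iff)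
  then show "real ((n - 1) ^ 3) + 1 < real (n ^ 3)" unfolding n by simp
  have "int (n ^ 3) \<le> int ((m ^ 3 div 2 + 2) choose 2)"
    using succ_cube_le_choose_two[OF \<open>m \<ge> 4\<close>] unfolding n by (simp only: of_nat_le_iff)
  also have "\<dots> \<le> u0 (m ^ 3) (int (m ^ 3) + 2)"
    using \<open>m \<ge> 4\<close> by (intro u0_self_plus_two_ge) simp
  finally have "int (n ^ 3) \<le> u0 ((n - 1) ^ 3) (int ((n - 1) ^ 3) + 2)" by (simp add: n)
  then show "real (n ^ 3) \<le> real_of_int (u0 ((n - 1) ^ 3) (int ((n - 1) ^ 3) + 2))"
    by (metis of_int_le_iff of_int_of_nat_eq)
qed

theorem proposition8:
  fixes n :: nat
  assumes "n \<ge> 3"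
  shows "((n = 3 \<or> n = 4) \<longrightarrow>
            real_of_int (l0 ((n - 1) ^ 3) (real (n ^ 3)))
              > real (fact n) ^ (2 * n) / real n ^ (n ^ 2))
       \<and> (n \<ge> 5 \<longrightarrow>
            real_of_int (l0 ((n - 1) ^ 3) (real (n ^ 3)))
              < real (fact n) ^ (2 * n) / real n ^ (n ^ 2))"
proof (intro conjI impI)
  assume "n = 3 \<or> n = 4"
  moreover have "u0 8 10 = 25" "u0 8 11 = 55" "u0 27 28 = 28" "u0 27 29 = 210"
    by (simp add: u0_def binom0_def; code_simp)+
  then have "l0 8 27 = 11" "l0 27 64 = 29"
    by (auto intro: l0_eqI)
  ultimately show "real_of_int (l0 ((n - 1) ^ 3) (real (n ^ 3)))
      > real (fact n) ^ (2 * n) / real n ^ (n ^ 2)"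
    by (auto simp: fact_numeral)
next
  assume n: "n \<ge> 5"
  have "real (((n - 1) ^ 3 + 2) * n ^ (n ^ 2)) < real ((fact n :: nat) ^ (2 * n))"
    using cube_plus_two_mult_less_fact_power[OF n] by linarith
  then have "real ((n - 1) ^ 3 + 2) * real n ^ (n ^ 2) < real (fact n) ^ (2 * n)"
    by (simp add: algebra_simps)
  then have "real ((n - 1) ^ 3 + 2) < real (fact n) ^ (2 * n) / real n ^ (n ^ 2)"
    using n by (simp add: pos_less_divide_eq)
  then show "real_of_int (l0 ((n - 1) ^ 3) (real (n ^ 3)))
      < real (fact n) ^ (2 * n) / real n ^ (n ^ 2)"
    using l0_cube_eq[OF n] by simp
qed

end
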